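(* Let $\mathcal{U}=\{u_1,\ldots,u_M\}\subset\mathbb{R}\setminus\{0\}$, $u_{\min}=\min_m|u_m|$, $u_{\max}=\max_m|u_m|$, $\sigma^2>0$, $N>k\ge1$, and $\sigma_{N/k}^2=\sigma^2/\log(N/k)$. Let $h(\omega)=\sum_{m=1}^M\exp\big(\frac{|u_m|u_{\max}}{\sigma_{N/k}^2}-\frac{u_m^2}{2\sigma_{N/k}^2}+\frac{u_m\omega}{\sigma_{N/k}^2}\big)$. For $\omega\sim\mathcal{N}(0,\sigma_{N/k}^2)$, $$\mathbb{P}(h(\omega)\le1)\le(N/k)^{-C_{1,2}},\qquad C_{1,2}=\frac{(u_{\max}-u_{\min}/2)^2}{2\sigma^2}.$$ *)

theory Defs
  imports "HOL-Probability.Probability"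
begin

definition sigma_sq_Nk :: "real \<Rightarrow> nat \<Rightarrow> nat \<Rightarrow> real" where
  "sigma_sq_Nk \<sigma>2 N k = \<sigma>2 / ln (real N / real k)"

definition h_fun :: "real set \<Rightarrow> real \<Rightarrow> nat \<Rightarrow> nat \<Rightarrow> real \<Rightarrow> real" where
  "h_fun U \<sigma>2 N k \<omega> =
     (let s = sigma_sq_Nk \<sigma>2 N k; umax = Max (abs ` U) in
      \<Sum>u\<in>U. exp (\<bar>u\<bar> * umax / s - u^2 / (2 * s) + u * \<omega> / s))"

end

theory Submission
  imports Defs
begin

(*
  Let u be a letter of minimal modulus and t = u_max - u_min/2 >= 0. Since h is a sum
  of positive terms, h(omega) <= 1 forces the u-summand to be at most 1, which unfolds
  to the half-line condition t <= -sgn(u) * omega. Moving the mean of the Gaussian to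
  the boundary point of that half-line (x^2 >= mu^2 + (x - mu)^2 whenever mu^2 <= mu * x)
  bounds its probability by exp(-t^2 / (2 sigma_N/k^2)), and since
  sigma_N/k^2 = sigma^2 / log(N/k) this is exactly (N/k)^(-C_1,2).
*)

lemma normal_density_le_shifted:
  assumes "\<mu>\<^sup>2 \<le> \<mu> * x"
  shows "normal_density 0 s x \<le> exp (- (\<mu>\<^sup>2) / (2 * s\<^sup>2)) * normal_density \<mu> s x"
proof -
  have "- (x\<^sup>2) \<le> - (\<mu>\<^sup>2) - (x - \<mu>)\<^sup>2"
    using assms by (simp add: power2_eq_square algebra_simps)
  then have "- (x\<^sup>2) / (2 * s\<^sup>2) \<le> (- (\<mu>\<^sup>2) - (x - \<mu>)\<^sup>2) / (2 * s\<^sup>2)"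
    by (rule divide_right_mono) simp
  then have "exp (- (x\<^sup>2) / (2 * s\<^sup>2)) \<le> exp (- (\<mu>\<^sup>2) / (2 * s\<^sup>2)) * exp (- ((x - \<mu>)\<^sup>2) / (2 * s\<^sup>2))"
    by (simp add: diff_divide_distrib flip: exp_add)
  then show ?thesis
    unfolding normal_density_def by (simp add: mult.left_commute divide_right_mono)
qed

lemma measure_normal_density_tail_le:
  assumes "0 \<le> t" and "\<bar>d\<bar> = 1" and "0 < s"
  shows "measure (density lborel (normal_density 0 s)) {x. t \<le> d * x} \<le> exp (- (t\<^sup>2) / (2 * s\<^sup>2))"
proof -
  let ?c = "exp (- (t\<^sup>2) / (2 * s\<^sup>2))"
  have pointwise: "ennreal (normal_density 0 s x) * indicator {x. t \<le> d * x} x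
      \<le> ennreal ?c * ennreal (normal_density (d * t) s x)" for x
  proof (cases "t \<le> d * x")
    case True
    have "d * d = 1" using assms(2) by (metis abs_mult_self_eq mult_1_right)
    then have sq: "(d * t)\<^sup>2 = t\<^sup>2" by (simp add: power2_eq_square algebra_simps)
    have "t\<^sup>2 \<le> (d * t) * x"
      using mult_left_mono[OF True assms(1)] by (simp add: power2_eq_square algebra_simps)
    then have "normal_density 0 s x \<le> ?c * normal_density (d * t) s x"
      using normal_density_le_shifted[of "d * t" x s] by (simp only: sq)
    then show ?thesis using True by (simp add: ennreal_leI flip: ennreal_mult)
  qed simp
  have "emeasure (density lborel (normal_density 0 s)) {x. t \<le> d * x}
      = (\<integral>\<^sup>+ x. ennreal (normal_density 0 s x) * indicator {x. t \<le> d * x} x \<partial>lborel)"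
    by (simp add: emeasure_density)
  also have "\<dots> \<le> (\<integral>\<^sup>+ x. ennreal ?c * ennreal (normal_density (d * t) s x) \<partial>lborel)"
    by (intro nn_integral_mono pointwise)
  also have "\<dots> = ennreal ?c * (\<integral>\<^sup>+ x. ennreal (normal_density (d * t) s x) \<partial>lborel)"
    by (simp add: nn_integral_cmult)
  also have "(\<integral>\<^sup>+ x. ennreal (normal_density (d * t) s x) \<partial>lborel) = 1"
    using prob_space.emeasure_space_1[OF prob_space_normal_density[OF assms(3)]]
    by (simp add: emeasure_density)
  finally show ?thesis by (simp add: measure_def enn2real_leI)
qed

lemma h_fun_summand_le:
  assumes "finite U" and "u \<in> U"
  shows "exp (\<bar>u\<bar> * Max (abs ` U) / sigma_sq_Nk \<sigma>2 N k - u\<^sup>2 / (2 * sigma_sq_Nk \<sigma>2 N k)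
               + u * \<omega> / sigma_sq_Nk \<sigma>2 N k)
         \<le> h_fun U \<sigma>2 N k \<omega>"
  unfolding h_fun_def Let_def by (rule member_le_sum) (use assms in auto)

lemma exp_summand_le_one_iff:
  fixes u a s \<omega> :: real
  assumes "u \<noteq> 0" and "0 < s"
  shows "exp (\<bar>u\<bar> * a / s - u\<^sup>2 / (2 * s) + u * \<omega> / s) \<le> 1 \<longleftrightarrow> a - \<bar>u\<bar> / 2 \<le> - sgn u * \<omega>"
proof -
  have "\<bar>u\<bar> * a / s - u\<^sup>2 / (2 * s) + u * \<omega> / s = (\<bar>u\<bar> * a - u\<^sup>2 / 2 + u * \<omega>) / s"
    by (simp add: add_divide_distrib diff_divide_distrib)
  also have "\<bar>u\<bar> * a - u\<^sup>2 / 2 + u * \<omega> = \<bar>u\<bar> * (a - \<bar>u\<bar> / 2 + sgn u * \<omega>)"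
  proof -
    have "u * \<omega> = \<bar>u\<bar> * (sgn u * \<omega>)" by (simp add: abs_mult_sgn flip: mult.assoc)
    moreover have "u\<^sup>2 = \<bar>u\<bar> * \<bar>u\<bar>" by (simp add: power2_eq_square)
    ultimately show ?thesis by (simp add: algebra_simps)
  qed
  finally show ?thesis
    using assms by (simp add: divide_le_0_iff mult_le_0_iff) arith
qed

lemma exp_div_sigma_sq_Nk_eq_powr:
  assumes "0 < \<sigma>2" and "1 \<le> k" and "k < N"
  shows "exp (- c / (2 * sigma_sq_Nk \<sigma>2 N k)) = (real N / real k) powr (- (c / (2 * \<sigma>2)))"
  using assms by (simp add: sigma_sq_Nk_def powr_def field_simps)

theorem lemma6:
  fixes U :: "real set" and \<sigma>2 :: real and N k :: nat
  assumes "finite U" and "U \<noteq> {}" and "0 \<notin> U"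
    and "\<sigma>2 > 0" and "1 \<le> k" and "k < N"
  shows "measure (density lborel (normal_density 0 (sqrt (sigma_sq_Nk \<sigma>2 N k))))
            {\<omega>. h_fun U \<sigma>2 N k \<omega> \<le> 1}
         \<le> (real N / real k) powr
              (- ((Max (abs ` U) - Min (abs ` U) / 2)^2 / (2 * \<sigma>2)))"
proof -
  define s where "s = sigma_sq_Nk \<sigma>2 N k"
  define t where "t = Max (abs ` U) - Min (abs ` U) / 2"
  have s: "0 < s" using assms by (simp add: s_def sigma_sq_Nk_def)
  have "Min (abs ` U) \<in> abs ` U" using assms(1,2) by (intro Min_in) auto
  then obtain u where u: "u \<in> U" "\<bar>u\<bar> = Min (abs ` U)" by auto
  have "u \<noteq> 0" using u assms(3) by auto
  have "Min (abs ` U) \<le> Max (abs ` U)" using assms(1,2) by (simp add: Min_le_iff Max_ge_iff)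
  then have "0 \<le> t" using u unfolding t_def by auto
  have event: "{\<omega>. h_fun U \<sigma>2 N k \<omega> \<le> 1} \<subseteq> {\<omega>. t \<le> - sgn u * \<omega>}"
  proof safe
    fix \<omega> assume "h_fun U \<sigma>2 N k \<omega> \<le> 1"
    with h_fun_summand_le[OF assms(1) u(1)]
    have "exp (\<bar>u\<bar> * Max (abs ` U) / s - u\<^sup>2 / (2 * s) + u * \<omega> / s) \<le> 1"
      unfolding s_def by (rule order_trans)
    then have "Max (abs ` U) - \<bar>u\<bar> / 2 \<le> - sgn u * \<omega>"
      by (simp only: exp_summand_le_one_iff[OF \<open>u \<noteq> 0\<close> s])
    then show "t \<le> - sgn u * \<omega>" by (simp only: t_def u(2))
  qed
  interpret prob_space "density lborel (normal_density 0 (sqrt s))"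
    using s by (intro prob_space_normal_density) simp
  have "measure (density lborel (normal_density 0 (sqrt s))) {\<omega>. h_fun U \<sigma>2 N k \<omega> \<le> 1}
      \<le> measure (density lborel (normal_density 0 (sqrt s))) {\<omega>. t \<le> - sgn u * \<omega>}"
    by (rule finite_measure_mono[OF event]) simp
  also have "\<dots> \<le> exp (- (t\<^sup>2) / (2 * s))"
    using measure_normal_density_tail_le[OF \<open>0 \<le> t\<close>, of "- sgn u" "sqrt s"] s \<open>u \<noteq> 0\<close>
    by (simp add: abs_sgn_eq)
  finally show ?thesis
    using exp_div_sigma_sq_Nk_eq_powr[OF assms(4-6), of "t\<^sup>2"] unfolding s_def t_def by simp
qed

end
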